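(* Let $A$ be a real $2\times 2$ matrix and $B$ a real $1\times 2$ matrix, and let $\mathrm{NT}=\{\vec{x}\in\mathbb{R}^2 : BA^k\vec{x}>0 \text{ for all integers } k\ge 0\}$. Suppose $A$ has a positive eigenvalue and has an eigenvector $\vec{\alpha}$ with $B\vec{\alpha}=0$. If there is a vector $\vec{\xi}\in\mathbb{R}^2$ with $B\vec{\xi}>0$ and $BA\vec{\xi}\le 0$, then $\mathrm{NT}=\emptyset$.
   Context: $\mathrm{NT}$ is the non-termination set of the loop "while $(B\vec{x}>0)$ $\{\vec{x}:=A\vec{x}\}$". *)

theory Defs
  imports "HOL-Analysis.Analysis"
begin

fun matpow :: "('a::semiring_1) ^'n^'n \<Rightarrow> nat \<Rightarrow> 'a^'n^'n" where
  "matpow A 0 = mat 1"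
| "matpow A (Suc k) = A ** matpow A k"

definition is_eigenvector :: "real^'n^'n \<Rightarrow> real^'n \<Rightarrow> real \<Rightarrow> bool" where
  "is_eigenvector A v lam \<longleftrightarrow> v \<noteq> 0 \<and> A *v v = lam *\<^sub>R v"

definition is_eigenvalue :: "real^'n^'n \<Rightarrow> real \<Rightarrow> bool" where
  "is_eigenvalue A lam \<longleftrightarrow> (\<exists>v. is_eigenvector A v lam)"

text \<open>Non-termination set of  while (B x > 0) { x := A x }, B a 1 x n matrix.\<close>
definition NT :: "real^'n^'n \<Rightarrow> real^'n^1 \<Rightarrow> (real^'n) set" where
  "NT A B = {x. \<forall>k::nat. (B *v (matpow A k *v x)) $ 1 > 0}"

end

theory Submission
  imports Defs
begin

(* The rows b = B and c = BA both annihilate the nonzero vector alpha (since B alpha = 0 and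
   A alpha = mu alpha), and in the plane this forces them to be proportional.  The factor is
   non-positive, as xi shows, so no x can pass both the first and the second loop test. *)

lemma inner_vec_2: "(p::real^2) \<bullet> x = p$1 * x$1 + p$2 * x$2"
  by (simp add: inner_vec_def sum_2)

lemma cross_2_eq_0_if_orthogonal_common:
  fixes p q a :: "real^2"
  assumes "a \<noteq> 0" "p \<bullet> a = 0" "q \<bullet> a = 0"
  shows "p$1 * q$2 - p$2 * q$1 = 0"
proof -
  have "(p$1 * q$2 - p$2 * q$1) * a$1 = q$2 * (p \<bullet> a) - p$2 * (q \<bullet> a)"
   and "(p$1 * q$2 - p$2 * q$1) * a$2 = p$1 * (q \<bullet> a) - q$1 * (p \<bullet> a)"
    by (simp_all add: inner_vec_2 algebra_simps)
  moreover have "a$1 \<noteq> 0 \<or> a$2 \<noteq> 0"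
    using assms(1) by (metis exhaust_2 vec_eq_iff zero_index)
  ultimately show ?thesis
    using assms(2,3) by auto
qed

lemma orthogonal_common_imp_proportional_2:
  fixes p q a x y :: "real^2"
  assumes "a \<noteq> 0" "p \<bullet> a = 0" "q \<bullet> a = 0"
  shows "(p \<bullet> x) * (q \<bullet> y) = (p \<bullet> y) * (q \<bullet> x)"
proof -
  have "(p \<bullet> x) * (q \<bullet> y) - (p \<bullet> y) * (q \<bullet> x)
        = (p$1 * q$2 - p$2 * q$1) * (x$1 * y$2 - x$2 * y$1)"
    by (simp add: inner_vec_2 algebra_simps)
  then show ?thesis
    using cross_2_eq_0_if_orthogonal_common[OF assms] by simp
qed

lemma NT_first_two_tests:
  assumes "x \<in> NT A B"
  shows "(B *v x) $ 1 > 0" "(B *v (A *v x)) $ 1 > 0"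
proof -
  have "\<forall>k. (B *v (matpow A k *v x)) $ 1 > 0"
    using assms by (simp add: NT_def)
  from this[rule_format, of 0] this[rule_format, of 1]
  show "(B *v x) $ 1 > 0" "(B *v (A *v x)) $ 1 > 0" by simp_all
qed

theorem lemma5:
  fixes A :: "real^2^2" and B :: "real^2^1"
  assumes "\<exists>lam > 0. is_eigenvalue A lam"
    and "\<exists>alpha mu. is_eigenvector A alpha mu \<and> B *v alpha = 0"
    and "\<exists>xi. (B *v xi) $ 1 > 0 \<and> (B *v (A *v xi)) $ 1 \<le> 0"
  shows "NT A B = {}"
proof (rule ccontr)
  assume "NT A B \<noteq> {}"
  then obtain x where x: "x \<in> NT A B" by blast
  obtain alpha mu where alpha: "alpha \<noteq> 0" "A *v alpha = mu *\<^sub>R alpha" "B *v alpha = 0"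
    using assms(2) unfolding is_eigenvector_def by blast
  obtain xi where xi: "(B *v xi) $ 1 > 0" "(B *v (A *v xi)) $ 1 \<le> 0"
    using assms(3) by blast
  define b c where "b = B $ 1" and "c = (B ** A) $ 1"
  have guards: "(B *v v) $ 1 = b \<bullet> v" "(B *v (A *v v)) $ 1 = c \<bullet> v" for v
    by (simp_all add: b_def c_def matrix_vector_mul_component matrix_vector_mul_assoc)
  have "b \<bullet> alpha = 0" "c \<bullet> alpha = 0"
    using alpha guards[of alpha] by (simp_all add: matrix_vector_mult_scaleR)
  then have "(c \<bullet> x) * (b \<bullet> xi) = (c \<bullet> xi) * (b \<bullet> x)"
    using orthogonal_common_imp_proportional_2 alpha(1) by blast
  moreover have "(c \<bullet> x) * (b \<bullet> xi) > 0"
    using NT_first_two_tests(2)[OF x, unfolded guards(2)] xi(1) by (simp add: guards(1))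
  moreover have "(c \<bullet> xi) * (b \<bullet> x) \<le> 0"
    using NT_first_two_tests(1)[OF x] xi(2)[unfolded guards(2)]
    by (simp add: guards(1) mult_nonpos_nonneg)
  ultimately show False by simp
qed

end
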